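(* Let $G=(V,E)$ be a finite, simple, undirected graph with $m=|E|\ge 1$ edges and no isolated vertices. Then for every partition $\Pi$ of $V$ into nonempty sets, the total null-adjusted persistence satisfies $\mathcal{P}^{\star}_{\Pi}\ge -1$. Moreover, if $G$ is multipartite, i.e. $V$ admits a partition $\Pi=\{V_1,\dots,V_k\}$ into nonempty independent sets (no edge has both endpoints in the same $V_j$), then $\mathcal{P}^{\star}_{\Pi}=-1$ for this canonical partition $\Pi$.
   Context: For a subset $\mathcal{C}\subseteq V$, let $m_i(\mathcal{C})$ be the number of edges with both endpoints in $\mathcal{C}$ and $m_e(\mathcal{C})$ the number of edges with exactly one endpoint in $\mathcal{C}$ (so $2m_i+m_e=\sum_{v\in\mathcal{C}}\deg v>0$ for nonempty $\mathcal{C}$ when there are no isolated vertices). The null-adjusted persistence of $\mathcal{C}$ is $\mathcal{P}^{\star}_{\mathcal{C}}=\frac{2m_i}{2m_i+m_e}-\frac{2m_i+m_e}{2m}$, where $m=|E|$. For a partition $\Pi$ of $V$, the total null-adjusted persistence is $\mathcal{P}^{\star}_{\Pi}=\sum_{\mathcal{C}\in\Pi}\mathcal{P}^{\star}_{\mathcal{C}}$. *)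

theory Defs
  imports Complex_Main "HOL-Library.Disjoint_Sets"
begin

definition simple_graph :: "'a set \<Rightarrow> 'a set set \<Rightarrow> bool" where
  "simple_graph V E \<longleftrightarrow> finite V \<and> (\<forall>e\<in>E. e \<subseteq> V \<and> card e = 2)"

definition no_isolated :: "'a set \<Rightarrow> 'a set set \<Rightarrow> bool" where
  "no_isolated V E \<longleftrightarrow> (\<forall>v\<in>V. \<exists>e\<in>E. v \<in> e)"

definition m_int :: "'a set set \<Rightarrow> 'a set \<Rightarrow> nat" where
  "m_int E C = card {e\<in>E. e \<subseteq> C}"

definition m_ext :: "'a set set \<Rightarrow> 'a set \<Rightarrow> nat" where
  "m_ext E C = card {e\<in>E. card (e \<inter> C) = 1}"

definition persistence_star :: "'a set set \<Rightarrow> 'a set \<Rightarrow> real" where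
  "persistence_star E C =
     2 * real (m_int E C) / (2 * real (m_int E C) + real (m_ext E C))
     - (2 * real (m_int E C) + real (m_ext E C)) / (2 * real (card E))"

definition total_persistence_star :: "'a set set \<Rightarrow> 'a set set \<Rightarrow> real" where
  "total_persistence_star E P = (\<Sum>C\<in>P. persistence_star E C)"

definition independent_set :: "'a set set \<Rightarrow> 'a set \<Rightarrow> bool" where
  "independent_set E C \<longleftrightarrow> (\<forall>e\<in>E. \<not> e \<subseteq> C)"

end

theory Submission
  imports Defs
begin

text \<open>The volumes \<open>2 m\<^sub>i + m\<^sub>e\<close> of the parts of a partition add up to \<open>2m\<close>, since each
  edge has exactly two endpoints and each endpoint lies in exactly one part. Hence the null
  terms of the parts sum to exactly 1, and the total persistence is
  \<open>(\<Sum>C. 2m\<^sub>i(C) / (2m\<^sub>i(C) + m\<^sub>e(C))) - 1\<close>: the sum is nonnegative, and it vanishes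
  when every part is independent, i.e. has \<open>m\<^sub>i = 0\<close>.\<close>

lemma card_Int_two_element_set:
  assumes "card e = 2"
  shows "card (e \<inter> C) = 2 * of_bool (e \<subseteq> C) + of_bool (card (e \<inter> C) = 1)"
proof -
  have "finite e" using assms card.infinite by fastforce
  then have "card (e \<inter> C) \<le> 2" and "card (e \<inter> C) = 2 \<longleftrightarrow> e \<subseteq> C"
    using assms card_mono[of e "e \<inter> C"] card_subset_eq[of e "e \<inter> C"]
    by (auto simp: Int_absorb2)
  then show ?thesis by auto
qed

lemma volume_eq_sum_card_Int:
  assumes "finite E" and "\<And>e. e \<in> E \<Longrightarrow> card e = 2"
  shows "2 * m_int E C + m_ext E C = (\<Sum>e\<in>E. card (e \<inter> C))"
proof -
  have "2 * m_int E C + m_ext E C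
      = (\<Sum>e\<in>E. 2 * of_bool (e \<subseteq> C) + of_bool (card (e \<inter> C) = 1))"
    using assms(1) by (simp add: m_int_def m_ext_def sum.distrib sum_distrib_left Int_def)
  also have "\<dots> = (\<Sum>e\<in>E. card (e \<inter> C))"
    using assms(2) by (intro sum.cong refl) (metis card_Int_two_element_set)
  finally show ?thesis .
qed

lemma sum_card_Int_partition:
  assumes "partition_on V P" and "finite V" and "e \<subseteq> V"
  shows "(\<Sum>C\<in>P. card (e \<inter> C)) = card e"
proof -
  have "(\<Sum>C\<in>P. card (e \<inter> C)) = card (\<Union>C\<in>P. e \<inter> C)"
  proof (rule card_UN_disjoint[symmetric])
    show "finite P" using assms(1,2) by (rule finite_elements[rotated])
    show "\<forall>C\<in>P. finite (e \<inter> C)" using assms(2,3) finite_subset by blast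
    show "\<forall>C\<in>P. \<forall>D\<in>P. C \<noteq> D \<longrightarrow> e \<inter> C \<inter> (e \<inter> D) = {}"
      using partition_onD2[OF assms(1)] by (auto dest: disjointD)
  qed
  also have "(\<Union>C\<in>P. e \<inter> C) = e"
    using partition_onD1[OF assms(1)] assms(3) by blast
  finally show ?thesis .
qed

lemma simple_graph_finite_edges:
  assumes "simple_graph V E"
  shows "finite E"
proof (rule finite_subset)
  show "E \<subseteq> Pow V" using assms by (auto simp: simple_graph_def)
  show "finite (Pow V)" using assms by (simp add: simple_graph_def)
qed

lemma sum_volume_partition:
  assumes "simple_graph V E" and "partition_on V P"
  shows "(\<Sum>C\<in>P. 2 * m_int E C + m_ext E C) = 2 * card E"
proof -
  have "finite V" and edges: "\<And>e. e \<in> E \<Longrightarrow> e \<subseteq> V \<and> card e = 2"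
    using assms(1) by (auto simp: simple_graph_def)
  have "(\<Sum>C\<in>P. 2 * m_int E C + m_ext E C) = (\<Sum>C\<in>P. \<Sum>e\<in>E. card (e \<inter> C))"
    using volume_eq_sum_card_Int[OF simple_graph_finite_edges[OF assms(1)]] edges by simp
  also have "\<dots> = (\<Sum>e\<in>E. \<Sum>C\<in>P. card (e \<inter> C))"
    by (rule sum.swap)
  also have "\<dots> = (\<Sum>e\<in>E. 2)"
    using sum_card_Int_partition[OF assms(2) \<open>finite V\<close>] edges by simp
  finally show ?thesis by simp
qed

lemma total_persistence_star_partition:
  assumes "simple_graph V E" and "E \<noteq> {}" and "partition_on V P"
  shows "total_persistence_star E P
    = (\<Sum>C\<in>P. 2 * real (m_int E C) / (2 * real (m_int E C) + real (m_ext E C))) - 1"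
proof -
  have "card E > 0"
    using assms(2) simple_graph_finite_edges[OF assms(1)] by (simp add: card_gt_0_iff)
  have "(\<Sum>C\<in>P. 2 * real (m_int E C) + real (m_ext E C)) = 2 * real (card E)"
    using arg_cong[OF sum_volume_partition[OF assms(1,3)], of real] by simp
  with \<open>card E > 0\<close> show ?thesis
    by (simp add: total_persistence_star_def persistence_star_def sum_subtractf
        flip: sum_divide_distrib)
qed

lemma m_int_independent_set:
  assumes "independent_set E C"
  shows "m_int E C = 0"
proof -
  have "{e\<in>E. e \<subseteq> C} = {}" using assms by (auto simp: independent_set_def)
  then show ?thesis unfolding m_int_def by (metis card.empty)
qed

theorem proposition3:
  fixes V :: "'a set" and E :: "'a set set"
  assumes "simple_graph V E"
    and "card E \<ge> 1"
    and "no_isolated V E"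
  shows "(\<forall>P. partition_on V P \<longrightarrow> total_persistence_star E P \<ge> -1)
    \<and> (\<forall>P. partition_on V P \<and> (\<forall>C\<in>P. independent_set E C)
            \<longrightarrow> total_persistence_star E P = -1)"
proof -
  have "E \<noteq> {}" using assms(2) by auto
  note total = total_persistence_star_partition[OF assms(1) this]
  show ?thesis
  proof (intro conjI allI impI)
    fix P assume "partition_on V P"
    then show "total_persistence_star E P \<ge> -1"
      by (simp add: total sum_nonneg)
  next
    fix P assume "partition_on V P \<and> (\<forall>C\<in>P. independent_set E C)"
    then show "total_persistence_star E P = -1"
      by (simp add: total m_int_independent_set)
  qed
qed

end
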